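(* Let $n\ge2$, $b_1,\dots,b_n\in\mathbb{R}^d$ with $\|b_i\|\le R'$ ($R'>0$), $B=\frac1n[b_1,\dots,b_n]^T$, each $g_i^*:\mathbb{R}\to\mathbb{R}\cup\{+\infty\}$ proper, lower semicontinuous, convex, $g^*(y)=\frac1n\sum_ig_i^*(y_i)$, and $\ell:\mathbb{R}^d\to\mathbb{R}\cup\{+\infty\}$ proper, lower semicontinuous, $\sigma$-strongly convex ($\sigma\ge0$). For the VRPDA$^2$ algorithm in the context, for all $k\ge2$ and all $(u,v)\in\mathcal{X}\times\mathcal{Y}$ (for every realization of the random indices), $$\psi_k(y_k)\le\sum_{i=2}^ka_ig^*_{j_i}(v_{j_i})+a_1g^*(v)+\frac n2\|v-y_0\|^2-\frac n2\|v-y_k\|^2,$$ $$\phi_k(x_k)\le A_k\ell(u)+\frac n2\|u-x_0\|^2-\frac{n+\sigma A_k}{2}\|u-x_k\|^2.$$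
   Context: Norms are Euclidean; $\sigma$-strong convexity of $f$ means $f((1-\alpha)x+\alpha\hat x)\le(1-\alpha)f(x)+\alpha f(\hat x)-\frac\sigma2\alpha(1-\alpha)\|\hat x-x\|^2$. $\mathcal{X}=\mathrm{dom}(\ell)$, $\mathcal{Y}=\mathrm{dom}(g^* )$; $y_{k,j}$ is the $j$-th coordinate of $y_k$. VRPDA$^2$ algorithm: given $(x_0,y_0),(u,v)\in\mathcal{X}\times\mathcal{Y}$: $\phi_0(x)=\frac12\|x-x_0\|^2$, $\psi_0(y)=\frac12\|y-y_0\|^2$, $a_0=A_0=0$, $\tilde a_1=\frac1{2R'}$; $\tilde\psi_1(y)=\psi_0(y)+\tilde a_1(\langle-Bx_0,y-v\rangle+g^*(y))$, $y_1=\arg\min\tilde\psi_1$; $z_1=B^Ty_1$; $\tilde\phi_1(x)=\phi_0(x)+\tilde a_1(\langle x-u,z_1\rangle+\ell(x))$, $x_1=\arg\min\tilde\phi_1$; $\psi_1=n\tilde\psi_1$, $\phi_1=n\tilde\phi_1$, $a_1=A_1=n\tilde a_1$, $a_2=\frac{a_1}{n-1}$, $A_2=A_1+a_2$. For $k=2,3,\dots$: $\bar x_{k-1}=x_{k-1}+\frac{a_{k-1}}{a_k}(x_{k-1}-x_{k-2})$; pick $j_k$ uniformly at random from $\{1,\dots,n\}$; $\psi_k(y)=\psi_{k-1}(y)+a_k(-b_{j_k}^T\bar x_{k-1}(y_{j_k}-v_{j_k})+g^*_{j_k}(y_{j_k}))$, $y_k=\arg\min_y\psi_k(y)$; $\phi_k(x)=\phi_{k-1}(x)+a_k(\langle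 x-u,z_{k-1}+(y_{k,j_k}-y_{k-1,j_k})b_{j_k}\rangle+\ell(x))$, $x_k=\arg\min_x\phi_k(x)$; $z_k=z_{k-1}+\frac1n(y_{k,j_k}-y_{k-1,j_k})b_{j_k}$; $a_{k+1}=\min\{(1+\frac1{n-1})a_k,\frac{\sqrt{n(n+\sigma A_k)}}{2R'}\}$, $A_{k+1}=A_k+a_{k+1}$. *)

theory Defs
  imports "HOL-Analysis.Analysis"
begin

text \<open>Functions into R \<union> {+\<infinity>} are modelled as functions into ereal that never take -\<infinity>.\<close>

definition proper_fun :: "('a \<Rightarrow> ereal) \<Rightarrow> bool" where
  "proper_fun f \<longleftrightarrow> (\<forall>x. f x \<noteq> -\<infinity>) \<and> (\<exists>x. f x \<noteq> \<infinity>)"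

definition lsc_fun :: "('a::topological_space \<Rightarrow> ereal) \<Rightarrow> bool" where
  "lsc_fun f \<longleftrightarrow> (\<forall>x. f x \<le> Liminf (at x) f)"

definition convex_fun :: "('a::real_vector \<Rightarrow> ereal) \<Rightarrow> bool" where
  "convex_fun f \<longleftrightarrow> (\<forall>x y (\<alpha>::real). 0 < \<alpha> \<and> \<alpha> < 1 \<longrightarrow>
      f ((1 - \<alpha>) *\<^sub>R x + \<alpha> *\<^sub>R y) \<le> ereal (1 - \<alpha>) * f x + ereal \<alpha> * f y)"

definition strongly_convex_fun :: "real \<Rightarrow> ('a::real_normed_vector \<Rightarrow> ereal) \<Rightarrow> bool" where
  "strongly_convex_fun \<sigma> f \<longleftrightarrow> (\<forall>x y (\<alpha>::real). 0 < \<alpha> \<and> \<alpha> < 1 \<longrightarrow>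
      f ((1 - \<alpha>) *\<^sub>R x + \<alpha> *\<^sub>R y) \<le> ereal (1 - \<alpha>) * f x + ereal \<alpha> * f y
        - ereal (\<sigma> / 2 * \<alpha> * (1 - \<alpha>) * (norm (y - x))\<^sup>2))"

definition edom :: "('a \<Rightarrow> ereal) \<Rightarrow> 'a set" where
  "edom f = {x. f x < \<infinity>}"

text \<open>Index type 'n with n = CARD('n); b :: 'n \<Rightarrow> 'x gives the rows b_i of n*B.\<close>

definition Bop :: "('n::finite \<Rightarrow> 'x::euclidean_space) \<Rightarrow> 'x \<Rightarrow> real^'n" where
  "Bop b x = (\<chi> i. (b i \<bullet> x) / real CARD('n))"

definition BopT :: "('n::finite \<Rightarrow> 'x::euclidean_space) \<Rightarrow> real^'n \<Rightarrow> 'x" where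
  "BopT b y = (1 / real CARD('n)) *\<^sub>R (\<Sum>i\<in>UNIV. (y $ i) *\<^sub>R b i)"

definition gstar :: "('n::finite \<Rightarrow> real \<Rightarrow> ereal) \<Rightarrow> real^'n \<Rightarrow> ereal" where
  "gstar gs y = ereal (1 / real CARD('n)) * (\<Sum>i\<in>UNIV. gs i (y $ i))"

fun vrpda_aA :: "nat \<Rightarrow> real \<Rightarrow> real \<Rightarrow> nat \<Rightarrow> real \<times> real" where
  "vrpda_aA n R \<sigma> 0 = (0, 0)"
| "vrpda_aA n R \<sigma> (Suc 0) = (real n / (2 * R), real n / (2 * R))"
| "vrpda_aA n R \<sigma> (Suc (Suc 0)) =
     (let a1 = real n / (2 * R) in (a1 / (real n - 1), a1 + a1 / (real n - 1)))"
| "vrpda_aA n R \<sigma> (Suc (Suc (Suc k))) =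
     (let (a, A) = vrpda_aA n R \<sigma> (Suc (Suc k));
          a' = min ((1 + 1 / (real n - 1)) * a) (sqrt (real n * (real n + \<sigma> * A)) / (2 * R))
      in (a', A + a'))"

definition va :: "nat \<Rightarrow> real \<Rightarrow> real \<Rightarrow> nat \<Rightarrow> real" where
  "va n R \<sigma> k = fst (vrpda_aA n R \<sigma> k)"

definition vA :: "nat \<Rightarrow> real \<Rightarrow> real \<Rightarrow> nat \<Rightarrow> real" where
  "vA n R \<sigma> k = snd (vrpda_aA n R \<sigma> k)"

text \<open>Extrapolated point xbar_{k-1}, indexed by k-1.\<close>
definition xbar :: "nat \<Rightarrow> real \<Rightarrow> real \<Rightarrow> (nat \<Rightarrow> 'x::real_vector) \<Rightarrow> nat \<Rightarrow> 'x" where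
  "xbar n R \<sigma> xs m = xs m + (va n R \<sigma> m / va n R \<sigma> (Suc m)) *\<^sub>R (xs m - xs (m - 1))"

fun psi :: "('n::finite \<Rightarrow> 'x::euclidean_space) \<Rightarrow> ('n \<Rightarrow> real \<Rightarrow> ereal) \<Rightarrow> real \<Rightarrow> real
      \<Rightarrow> 'x \<Rightarrow> real^'n \<Rightarrow> real^'n \<Rightarrow> (nat \<Rightarrow> 'n) \<Rightarrow> (nat \<Rightarrow> 'x) \<Rightarrow> nat \<Rightarrow> real^'n \<Rightarrow> ereal" where
  "psi b gs R \<sigma> x0 y0 v js xs 0 y = ereal ((norm (y - y0))\<^sup>2 / 2)"
| "psi b gs R \<sigma> x0 y0 v js xs (Suc 0) y =
     ereal (real CARD('n)) *
       (ereal ((norm (y - y0))\<^sup>2 / 2)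
        + ereal (1 / (2 * R)) * (ereal ((- Bop b x0) \<bullet> (y - v)) + gstar gs y))"
| "psi b gs R \<sigma> x0 y0 v js xs (Suc (Suc k)) y =
     psi b gs R \<sigma> x0 y0 v js xs (Suc k) y
     + ereal (va CARD('n) R \<sigma> (Suc (Suc k))) *
        (ereal (- (b (js (Suc (Suc k))) \<bullet> xbar CARD('n) R \<sigma> xs (Suc k))
                  * (y $ js (Suc (Suc k)) - v $ js (Suc (Suc k))))
         + gs (js (Suc (Suc k))) (y $ js (Suc (Suc k))))"

fun phi :: "('n::finite \<Rightarrow> 'x::euclidean_space) \<Rightarrow> ('x \<Rightarrow> ereal) \<Rightarrow> real \<Rightarrow> real
      \<Rightarrow> 'x \<Rightarrow> 'x \<Rightarrow> (nat \<Rightarrow> 'n) \<Rightarrow> (nat \<Rightarrow> real^'n) \<Rightarrow> (nat \<Rightarrow> 'x) \<Rightarrow> nat \<Rightarrow> 'x \<Rightarrow> ereal" where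
  "phi b ell R \<sigma> x0 u js ys zs 0 x = ereal ((norm (x - x0))\<^sup>2 / 2)"
| "phi b ell R \<sigma> x0 u js ys zs (Suc 0) x =
     ereal (real CARD('n)) *
       (ereal ((norm (x - x0))\<^sup>2 / 2)
        + ereal (1 / (2 * R)) * (ereal ((x - u) \<bullet> zs 1) + ell x))"
| "phi b ell R \<sigma> x0 u js ys zs (Suc (Suc k)) x =
     phi b ell R \<sigma> x0 u js ys zs (Suc k) x
     + ereal (va CARD('n) R \<sigma> (Suc (Suc k))) *
        (ereal ((x - u) \<bullet> (zs (Suc k)
            + (ys (Suc (Suc k)) $ js (Suc (Suc k)) - ys (Suc k) $ js (Suc (Suc k)))
                *\<^sub>R b (js (Suc (Suc k)))))
         + ell x)"

definition vrpda2_run ::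
  "('n::finite \<Rightarrow> 'x::euclidean_space) \<Rightarrow> ('n \<Rightarrow> real \<Rightarrow> ereal) \<Rightarrow> ('x \<Rightarrow> ereal) \<Rightarrow> real \<Rightarrow> real
   \<Rightarrow> 'x \<Rightarrow> real^'n \<Rightarrow> 'x \<Rightarrow> real^'n \<Rightarrow> (nat \<Rightarrow> 'n)
   \<Rightarrow> (nat \<Rightarrow> 'x) \<Rightarrow> (nat \<Rightarrow> real^'n) \<Rightarrow> (nat \<Rightarrow> 'x) \<Rightarrow> bool" where
  "vrpda2_run b gs ell R \<sigma> x0 y0 u v js xs ys zs \<longleftrightarrow>
     xs 0 = x0 \<and> ys 0 = y0 \<and>
     (\<forall>k\<ge>1. \<forall>y. psi b gs R \<sigma> x0 y0 v js xs k (ys k) \<le> psi b gs R \<sigma> x0 y0 v js xs k y) \<and>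
     (\<forall>k\<ge>1. \<forall>x. phi b ell R \<sigma> x0 u js ys zs k (xs k) \<le> phi b ell R \<sigma> x0 u js ys zs k x) \<and>
     zs 1 = BopT b (ys 1) \<and>
     (\<forall>k\<ge>2. zs k = zs (k - 1)
        + (1 / real CARD('n)) *\<^sub>R ((ys k $ js k - ys (k - 1) $ js k) *\<^sub>R b (js k)))"

end

theory Submission
  imports Defs
begin

(* psi_k and phi_k are built from a multiple of a squared distance by adding nonnegative
   multiples of convex functions and of affine terms, so psi_k is n-strongly convex and phi_k is
   (n + sigma A_k)-strongly convex. At its minimizer a mu-strongly convex function lies at least
   mu/2 times the squared distance below its value at any other point. Evaluating psi_k at v and
   phi_k at u, where all affine terms vanish, gives the two bounds. *)

(* Excluding -\<infinity> keeps the class closed under sums, which never meet \<infinity> + -\<infinity>. *)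
definition strongly_convex_ereal :: "real \<Rightarrow> ('a::real_normed_vector \<Rightarrow> ereal) \<Rightarrow> bool" where
  "strongly_convex_ereal \<mu> F \<longleftrightarrow> (\<forall>x. F x \<noteq> -\<infinity>) \<and> strongly_convex_fun \<mu> F"

lemma strongly_convex_fun_0_iff_convex_fun: "strongly_convex_fun 0 f \<longleftrightarrow> convex_fun f"
  by (simp add: strongly_convex_fun_def convex_fun_def)

lemma strongly_convex_ereal_if_proper:
  "proper_fun f \<Longrightarrow> strongly_convex_fun \<mu> f \<Longrightarrow> strongly_convex_ereal \<mu> f"
  by (simp add: strongly_convex_ereal_def proper_fun_def)

lemma strongly_convex_funD:
  "strongly_convex_fun \<mu> F \<Longrightarrow> 0 < t \<Longrightarrow> t < 1 \<Longrightarrow>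
    F ((1 - t) *\<^sub>R x + t *\<^sub>R y)
      \<le> ereal (1 - t) * F x + ereal t * F y - ereal (\<mu> / 2 * t * (1 - t) * (norm (y - x))\<^sup>2)"
  unfolding strongly_convex_fun_def by blast

lemma strongly_convex_ereal_add:
  fixes F G :: "'a::real_normed_vector \<Rightarrow> ereal"
  assumes F: "strongly_convex_ereal \<mu> F" and G: "strongly_convex_ereal \<nu> G"
  shows "strongly_convex_ereal (\<mu> + \<nu>) (\<lambda>x. F x + G x)"
  unfolding strongly_convex_ereal_def strongly_convex_fun_def
proof (intro conjI allI impI)
  fix x show "F x + G x \<noteq> -\<infinity>"
    using F G by (simp add: strongly_convex_ereal_def)
next
  fix x y :: 'a and t :: real assume t: "0 < t \<and> t < 1"
  let ?z = "(1 - t) *\<^sub>R x + t *\<^sub>R y" and ?d = "(norm (y - x))\<^sup>2"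
  have "F ?z + G ?z \<le> (ereal (1 - t) * F x + ereal t * F y - ereal (\<mu> / 2 * t * (1 - t) * ?d))
                    + (ereal (1 - t) * G x + ereal t * G y - ereal (\<nu> / 2 * t * (1 - t) * ?d))"
    using F G t by (intro add_mono strongly_convex_funD) (auto simp: strongly_convex_ereal_def)
  also have "\<dots> = ereal (1 - t) * (F x + G x) + ereal t * (F y + G y)
                   - ereal ((\<mu> + \<nu>) / 2 * t * (1 - t) * ?d)"
    using F G unfolding strongly_convex_ereal_def
    by (cases "F x"; cases "F y"; cases "G x"; cases "G y") (auto simp: field_simps)
  finally show "F ?z + G ?z \<le> ereal (1 - t) * (F x + G x) + ereal t * (F y + G y)
                  - ereal ((\<mu> + \<nu>) / 2 * t * (1 - t) * ?d)" .
qed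

lemma strongly_convex_ereal_scale:
  fixes F :: "'a::real_normed_vector \<Rightarrow> ereal"
  assumes F: "strongly_convex_ereal \<mu> F" and c: "0 \<le> c"
  shows "strongly_convex_ereal (c * \<mu>) (\<lambda>x. ereal c * F x)"
  unfolding strongly_convex_ereal_def strongly_convex_fun_def
proof (intro conjI allI impI)
  fix x show "ereal c * F x \<noteq> -\<infinity>"
    using F c by (cases "F x") (auto simp: strongly_convex_ereal_def)
next
  fix x y :: 'a and t :: real assume t: "0 < t \<and> t < 1"
  let ?z = "(1 - t) *\<^sub>R x + t *\<^sub>R y" and ?d = "(norm (y - x))\<^sup>2"
  have "ereal c * F ?z \<le> ereal c * (ereal (1 - t) * F x + ereal t * F y - ereal (\<mu> / 2 * t * (1 - t) * ?d))"
    using F c t by (intro ereal_mult_left_mono strongly_convex_funD) (auto simp: strongly_convex_ereal_def)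
  also have "\<dots> = ereal (1 - t) * (ereal c * F x) + ereal t * (ereal c * F y)
                   - ereal (c * \<mu> / 2 * t * (1 - t) * ?d)"
    using F c t unfolding strongly_convex_ereal_def
    by (cases "F x"; cases "F y"; cases "c = 0") (auto simp: field_simps)
  finally show "ereal c * F ?z \<le> ereal (1 - t) * (ereal c * F x) + ereal t * (ereal c * F y)
                  - ereal (c * \<mu> / 2 * t * (1 - t) * ?d)" .
qed

lemma strongly_convex_ereal_affine:
  assumes "\<And>x y t. f ((1 - t) *\<^sub>R x + t *\<^sub>R y) = (1 - t) * f x + t * f y"
  shows "strongly_convex_ereal 0 (\<lambda>x. ereal (f x))"
  using assms by (simp add: strongly_convex_ereal_def strongly_convex_fun_def)

lemma strongly_convex_ereal_sum:
  fixes F :: "'i \<Rightarrow> 'a::real_normed_vector \<Rightarrow> ereal"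
  assumes "finite S" "\<And>i. i \<in> S \<Longrightarrow> strongly_convex_ereal (\<mu> i) (F i)"
  shows "strongly_convex_ereal (\<Sum>i\<in>S. \<mu> i) (\<lambda>x. \<Sum>i\<in>S. F i x)"
  using assms
proof (induction S rule: finite_induct)
  case empty
  have "strongly_convex_ereal 0 (\<lambda>x::'a. ereal 0)"
    by (rule strongly_convex_ereal_affine) simp
  then show ?case by (simp add: zero_ereal_def)
next
  case (insert i S)
  then show ?case by (simp add: strongly_convex_ereal_add)
qed

lemma strongly_convex_ereal_compose_linear:
  assumes "strongly_convex_ereal 0 g" "linear L"
  shows "strongly_convex_ereal 0 (\<lambda>x. g (L x))"
  using assms by (simp add: strongly_convex_ereal_def strongly_convex_fun_def linear_add linear_scale)

lemma power2_norm_convex_combination: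
  fixes p q :: "'a::real_inner"
  shows "(norm ((1 - t) *\<^sub>R p + t *\<^sub>R q))\<^sup>2
    = (1 - t) * (norm p)\<^sup>2 + t * (norm q)\<^sup>2 - t * (1 - t) * (norm (q - p))\<^sup>2"
  by (simp add: power2_norm_eq_inner inner_simps inner_commute[of q p] algebra_simps)

lemma strongly_convex_ereal_half_dist_sq:
  fixes z :: "'a::real_inner"
  shows "strongly_convex_ereal 1 (\<lambda>x. ereal ((norm (x - z))\<^sup>2 / 2))"
  unfolding strongly_convex_ereal_def strongly_convex_fun_def
proof (intro conjI allI impI)
  fix x y :: 'a and t :: real
  have "(1 - t) *\<^sub>R x + t *\<^sub>R y - z = (1 - t) *\<^sub>R (x - z) + t *\<^sub>R (y - z)"
    by (simp add: algebra_simps)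
  then have "(norm ((1 - t) *\<^sub>R x + t *\<^sub>R y - z))\<^sup>2
      = (1 - t) * (norm (x - z))\<^sup>2 + t * (norm (y - z))\<^sup>2 - t * (1 - t) * (norm (y - x))\<^sup>2"
    using power2_norm_convex_combination[of t "x - z" "y - z"] by simp
  then show "ereal ((norm ((1 - t) *\<^sub>R x + t *\<^sub>R y - z))\<^sup>2 / 2)
      \<le> ereal (1 - t) * ereal ((norm (x - z))\<^sup>2 / 2) + ereal t * ereal ((norm (y - z))\<^sup>2 / 2)
        - ereal (1 / 2 * t * (1 - t) * (norm (y - x))\<^sup>2)"
    by (simp add: field_simps)
qed simp

lemma strongly_convex_ereal_gstar:
  assumes "\<And>i. strongly_convex_ereal 0 (gs i)"
  shows "strongly_convex_ereal 0 (gstar (gs :: 'n::finite \<Rightarrow> real \<Rightarrow> ereal))"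
proof -
  have "strongly_convex_ereal (\<Sum>i\<in>(UNIV::'n set). 0) (\<lambda>y::real^'n. \<Sum>i\<in>UNIV. gs i (y $ i))"
    by (intro strongly_convex_ereal_sum
        strongly_convex_ereal_compose_linear[OF assms bounded_linear.linear[OF bounded_linear_vec_nth]]) simp
  from strongly_convex_ereal_scale[OF this, of "1 / real CARD('n)"]
  show ?thesis by (simp add: gstar_def[abs_def])
qed

lemma strongly_convex_ereal_minimizer_bound:
  fixes F :: "'a::real_normed_vector \<Rightarrow> ereal"
  assumes F: "strongly_convex_ereal \<mu> F" and min: "\<And>w. F z \<le> F w"
  shows "F z \<le> F v - ereal (\<mu> / 2 * (norm (v - z))\<^sup>2)"
proof (cases "F v = \<infinity>")
  case False
  have no_minf: "\<And>x. F x \<noteq> -\<infinity>"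
    using F by (simp add: strongly_convex_ereal_def)
  obtain fv where fv: "F v = ereal fv"
    using False no_minf[of v] by (cases "F v") auto
  obtain fz where fz: "F z = ereal fz"
    using min[of v] fv no_minf[of z] by (cases "F z") auto
  let ?c = "\<mu> / 2 * (norm (v - z))\<^sup>2"
  have "s * ?c \<le> fv - fz" if s: "0 < s" "s < 1" for s
  proof -
    have "F z \<le> F ((1 - (1 - s)) *\<^sub>R z + (1 - s) *\<^sub>R v)"
      by (rule min)
    also have "\<dots> \<le> ereal s * F z + ereal (1 - s) * F v - ereal ((1 - s) * s * ?c)"
      using strongly_convex_funD[of \<mu> F "1 - s" z v] F s
      by (simp add: strongly_convex_ereal_def mult_ac)
    finally have "(1 - s) * fz \<le> (1 - s) * (fv - s * ?c)"
      by (simp add: fz fv algebra_simps)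
    then show ?thesis
      using s by simp
  qed
  then have "?c \<le> fv - fz"
    by (rule field_le_mult_one_interval)
  then show ?thesis
    by (simp add: fz fv)
qed simp

lemma va_vA_nonneg:
  assumes "2 \<le> n" "0 < R" "0 \<le> \<sigma>"
  shows "0 \<le> va n R \<sigma> k \<and> 0 \<le> vA n R \<sigma> k"
  using assms
proof (induction n R \<sigma> k rule: vrpda_aA.induct)
  case (4 n R \<sigma> k)
  obtain a A where aA: "vrpda_aA n R \<sigma> (Suc (Suc k)) = (a, A)"
    by force
  have "0 \<le> a" "0 \<le> A" "2 \<le> real n"
    using 4 aA by (auto simp: va_def vA_def)
  then show ?case
    using aA 4 by (auto simp: va_def vA_def Let_def intro!: add_nonneg_nonneg divide_nonneg_pos)
qed (auto simp: va_def vA_def Let_def)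

lemma va_Suc_0: "va n R \<sigma> (Suc 0) = real n / (2 * R)"
  by (simp add: va_def)

lemma vA_Suc_0: "vA n R \<sigma> (Suc 0) = real n / (2 * R)"
  by (simp add: vA_def)

lemma vA_Suc_Suc: "vA n R \<sigma> (Suc (Suc m)) = vA n R \<sigma> (Suc m) + va n R \<sigma> (Suc (Suc m))"
proof (cases m)
  case (Suc k)
  obtain a A where "vrpda_aA n R \<sigma> (Suc (Suc k)) = (a, A)"
    by force
  with Suc show ?thesis
    by (simp add: va_def vA_def Let_def)
qed (simp add: va_def vA_def Let_def)

lemma psi_strongly_convex:
  fixes b :: "'n::finite \<Rightarrow> 'x::euclidean_space"
  assumes n: "2 \<le> CARD('n)" and R: "0 < R" and \<sigma>: "0 \<le> \<sigma>"
    and gs: "\<And>i. strongly_convex_ereal 0 (gs i)"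
  shows "strongly_convex_ereal (real CARD('n)) (psi b gs R \<sigma> x0 y0 v js xs (Suc m))"
proof (induction m)
  case 0
  have "strongly_convex_ereal 0 (\<lambda>y. ereal ((- Bop b x0) \<bullet> (y - v)))"
    by (rule strongly_convex_ereal_affine) (simp add: inner_simps algebra_simps)
  then have "strongly_convex_ereal (real CARD('n) * (1 + 1 / (2 * R) * (0 + 0)))
     (psi b gs R \<sigma> x0 y0 v js xs (Suc 0))"
    unfolding psi.simps(2)[abs_def] using R
    by (intro strongly_convex_ereal_scale strongly_convex_ereal_add strongly_convex_ereal_gstar
        strongly_convex_ereal_half_dist_sq gs) auto
  moreover have "real CARD('n) * (1 + 1 / (2 * R) * (0 + 0)) = real CARD('n)"
    by simp
  ultimately show ?case
    by (simp only:)
next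
  case (Suc m)
  let ?j = "js (Suc (Suc m))"
  have "strongly_convex_ereal 0 (\<lambda>y::real^'n.
      ereal (- (b ?j \<bullet> xbar CARD('n) R \<sigma> xs (Suc m)) * (y $ ?j - v $ ?j)))"
    by (rule strongly_convex_ereal_affine) (simp add: algebra_simps)
  then have "strongly_convex_ereal (real CARD('n) + va CARD('n) R \<sigma> (Suc (Suc m)) * (0 + 0))
      (psi b gs R \<sigma> x0 y0 v js xs (Suc (Suc m)))"
    unfolding psi.simps(3)[abs_def] using va_vA_nonneg[OF n R \<sigma>]
    by (intro strongly_convex_ereal_add Suc.IH strongly_convex_ereal_scale
        strongly_convex_ereal_compose_linear[OF gs] bounded_linear.linear[OF bounded_linear_vec_nth]) auto
  moreover have "real CARD('n) + va CARD('n) R \<sigma> (Suc (Suc m)) * (0 + 0) = real CARD('n)"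
    by simp
  ultimately show ?case
    by (simp only:)
qed

lemma phi_strongly_convex:
  fixes b :: "'n::finite \<Rightarrow> 'x::euclidean_space"
  assumes n: "2 \<le> CARD('n)" and R: "0 < R" and \<sigma>: "0 \<le> \<sigma>"
    and ell: "strongly_convex_ereal \<sigma> ell"
  shows "strongly_convex_ereal (real CARD('n) + \<sigma> * vA CARD('n) R \<sigma> (Suc m))
           (phi b ell R \<sigma> x0 u js ys zs (Suc m))"
proof (induction m)
  case 0
  have "strongly_convex_ereal 0 (\<lambda>x. ereal ((x - u) \<bullet> zs 1))"
    by (rule strongly_convex_ereal_affine) (simp add: inner_simps algebra_simps)
  then have "strongly_convex_ereal (real CARD('n) * (1 + 1 / (2 * R) * (0 + \<sigma>)))
      (phi b ell R \<sigma> x0 u js ys zs (Suc 0))"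
    unfolding phi.simps(2)[abs_def] using R
    by (intro strongly_convex_ereal_scale strongly_convex_ereal_add
        strongly_convex_ereal_half_dist_sq ell) auto
  moreover have "real CARD('n) * (1 + 1 / (2 * R) * (0 + \<sigma>))
      = real CARD('n) + \<sigma> * vA CARD('n) R \<sigma> (Suc 0)"
    using R by (simp add: vA_Suc_0 field_simps)
  ultimately show ?case
    by (simp only:)
next
  case (Suc m)
  let ?j = "js (Suc (Suc m))"
  have "strongly_convex_ereal 0 (\<lambda>x. ereal ((x - u) \<bullet>
      (zs (Suc m) + (ys (Suc (Suc m)) $ ?j - ys (Suc m) $ ?j) *\<^sub>R b ?j)))"
    by (rule strongly_convex_ereal_affine) (simp add: inner_simps algebra_simps)
  then have "strongly_convex_ereal
      ((real CARD('n) + \<sigma> * vA CARD('n) R \<sigma> (Suc m)) + va CARD('n) R \<sigma> (Suc (Suc m)) * (0 + \<sigma>))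
      (phi b ell R \<sigma> x0 u js ys zs (Suc (Suc m)))"
    unfolding phi.simps(3)[abs_def] using va_vA_nonneg[OF n R \<sigma>]
    by (intro strongly_convex_ereal_add Suc.IH strongly_convex_ereal_scale ell) auto
  moreover have "(real CARD('n) + \<sigma> * vA CARD('n) R \<sigma> (Suc m)) + va CARD('n) R \<sigma> (Suc (Suc m)) * (0 + \<sigma>)
      = real CARD('n) + \<sigma> * vA CARD('n) R \<sigma> (Suc (Suc m))"
    by (simp add: vA_Suc_Suc algebra_simps)
  ultimately show ?case
    by (simp only:)
qed

lemma psi_at_v:
  fixes b :: "'n::finite \<Rightarrow> 'x::euclidean_space"
  shows "psi b gs R \<sigma> x0 y0 v js xs (Suc m) v
    = (\<Sum>i\<in>{2..Suc m}. ereal (va CARD('n) R \<sigma> i) * gs (js i) (v $ js i))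
      + ereal (va CARD('n) R \<sigma> 1) * gstar gs v
      + ereal (real CARD('n) / 2 * (norm (v - y0))\<^sup>2)"
proof (induction m)
  case 0
  show ?case
    by (simp add: ereal_pos_distrib va_Suc_0 mult.assoc[symmetric] add.commute)
next
  case (Suc m)
  then show ?case
    by (simp add: ac_simps)
qed

lemma phi_at_u:
  fixes b :: "'n::finite \<Rightarrow> 'x::euclidean_space"
  assumes n: "2 \<le> CARD('n)" and R: "0 < R" and \<sigma>: "0 \<le> \<sigma>"
  shows "phi b ell R \<sigma> x0 u js ys zs (Suc m) u
    = ereal (vA CARD('n) R \<sigma> (Suc m)) * ell u + ereal (real CARD('n) / 2 * (norm (u - x0))\<^sup>2)"
proof (induction m)
  case 0
  show ?case
    by (simp add: ereal_pos_distrib vA_Suc_0 mult.assoc[symmetric] add.commute)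
next
  case (Suc m)
  have "ereal (vA CARD('n) R \<sigma> (Suc (Suc m))) * ell u
      = ereal (vA CARD('n) R \<sigma> (Suc m)) * ell u + ereal (va CARD('n) R \<sigma> (Suc (Suc m))) * ell u"
    using va_vA_nonneg[OF n R \<sigma>]
    by (simp add: vA_Suc_Suc ereal_left_distrib flip: plus_ereal.simps(1))
  with Suc show ?case
    by (simp add: ac_simps)
qed

theorem lemma4:
  fixes b :: "'n::finite \<Rightarrow> 'x::euclidean_space"
    and gs :: "'n \<Rightarrow> real \<Rightarrow> ereal"
    and ell :: "'x \<Rightarrow> ereal"
    and R \<sigma> :: real
    and x0 u :: 'x and y0 v :: "real^'n"
    and js :: "nat \<Rightarrow> 'n"
    and xs :: "nat \<Rightarrow> 'x" and ys :: "nat \<Rightarrow> real^'n" and zs :: "nat \<Rightarrow> 'x"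
  assumes n2: "CARD('n) \<ge> 2"
    and R_pos: "R > 0"
    and b_bound: "\<forall>i. norm (b i) \<le> R"
    and g_props: "\<forall>i. proper_fun (gs i) \<and> lsc_fun (gs i) \<and> convex_fun (gs i)"
    and ell_props: "proper_fun ell \<and> lsc_fun ell \<and> strongly_convex_fun \<sigma> ell"
    and sigma_nn: "\<sigma> \<ge> 0"
    and x0_dom: "x0 \<in> edom ell" and y0_dom: "y0 \<in> edom (gstar gs)"
    and u_dom: "u \<in> edom ell" and v_dom: "v \<in> edom (gstar gs)"
    and run: "vrpda2_run b gs ell R \<sigma> x0 y0 u v js xs ys zs"
    and k2: "k \<ge> 2"
  shows "psi b gs R \<sigma> x0 y0 v js xs k (ys k)
           \<le> (\<Sum>i\<in>{2..k}. ereal (va CARD('n) R \<sigma> i) * gs (js i) (v $ js i))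
             + ereal (va CARD('n) R \<sigma> 1) * gstar gs v
             + ereal (real CARD('n) / 2 * (norm (v - y0))\<^sup>2)
             - ereal (real CARD('n) / 2 * (norm (v - ys k))\<^sup>2)
         \<and> phi b ell R \<sigma> x0 u js ys zs k (xs k)
           \<le> ereal (vA CARD('n) R \<sigma> k) * ell u
             + ereal (real CARD('n) / 2 * (norm (u - x0))\<^sup>2)
             - ereal ((real CARD('n) + \<sigma> * vA CARD('n) R \<sigma> k) / 2 * (norm (u - xs k))\<^sup>2)"
proof -
  obtain m where k: "k = Suc m"
    using k2 by (cases k) auto
  have gs: "\<And>i. strongly_convex_ereal 0 (gs i)"
    using g_props by (simp add: strongly_convex_ereal_if_proper strongly_convex_fun_0_iff_convex_fun)
  have ell: "strongly_convex_ereal \<sigma> ell"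
    using ell_props by (simp add: strongly_convex_ereal_if_proper)
  have psi_min: "\<And>y. psi b gs R \<sigma> x0 y0 v js xs k (ys k) \<le> psi b gs R \<sigma> x0 y0 v js xs k y"
    and phi_min: "\<And>x. phi b ell R \<sigma> x0 u js ys zs k (xs k) \<le> phi b ell R \<sigma> x0 u js ys zs k x"
    using run k2 by (auto simp: vrpda2_run_def)
  show ?thesis
    using strongly_convex_ereal_minimizer_bound[OF psi_strongly_convex[OF n2 R_pos sigma_nn gs]
          psi_min[unfolded k], of v]
      strongly_convex_ereal_minimizer_bound[OF phi_strongly_convex[OF n2 R_pos sigma_nn ell]
          phi_min[unfolded k], of u]
    unfolding k psi_at_v phi_at_u[OF n2 R_pos sigma_nn]
    by blast
qed

end
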